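(* Let $p$ be a prime number and let $A=\{1,p,p^2,p^3,\dots\}$. For every positive integer $n$, $$N^p_A(n)=\sum_{k=0}^{n-1}p_A(k)\big(\vartheta_p(n-k)+1\big).$$
   Context: For a set $A$ of positive integers, $N^p_A(n)$ is the total number of parts, summed over all partitions of $n$ with all parts in $A$, and $p_A(n)$ is the number of partitions of $n$ with parts in $A$, with $p_A(0)=1$. $\vartheta_p(m)$ is the $p$-adic valuation of $m$, i.e. the exponent of $p$ in $m$. *)

theory Defs
  imports "HOL-Library.Multiset" "HOL-Computational_Algebra.Primes"
begin

definition partitions_in :: "nat set \<Rightarrow> nat \<Rightarrow> nat multiset set" where
  "partitions_in A n = {M. set_mset M \<subseteq> A \<and> sum_mset M = n}"

definition p_A :: "nat set \<Rightarrow> nat \<Rightarrow> nat" where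
  "p_A A n = card (partitions_in A n)"

definition N_A :: "nat set \<Rightarrow> nat \<Rightarrow> nat" where
  "N_A A n = (\<Sum>M\<in>partitions_in A n. size M)"

end

theory Submission
  imports Defs
begin

text \<open>A part a occurring c times in a partition of n can be marked in c ways, labelled
  j = 1, ..., c, so N_A(n) counts marked partitions. Removing j copies of a from a partition
  marked at (a, j) leaves a partition of k = n - j a < n with a dividing n - k, and this is a
  bijection onto the pairs (partition of k < n, a \<in> A dividing n - k): the inverse adds
  (n - k) / a copies of a. For A the powers of p, the elements of A dividing n - k are
  p^0, ..., p^\<vartheta>_p(n - k).\<close>

lemma member_le_sum_mset: "(x::nat) \<in># M \<Longrightarrow> x \<le> sum_mset M"
  by (induction M) auto

lemma size_le_sum_mset:
  fixes M :: "nat multiset"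
  assumes "0 \<notin># M"
  shows "size M \<le> sum_mset M"
proof -
  have "size M = (\<Sum>x\<in>#M. 1)"
    by (rule size_eq_sum_mset)
  also have "\<dots> \<le> (\<Sum>x\<in>#M. x)"
    using assms by (intro sum_mset_mono) (metis not_less less_one)
  finally show ?thesis
    by simp
qed

lemma finite_partitions_in:
  assumes "0 \<notin> A"
  shows "finite (partitions_in A n)"
proof (rule finite_subset)
  show "partitions_in A n \<subseteq> (\<Union>m\<le>n. multisets_of_size {1..n} m)"
  proof
    fix M assume M: "M \<in> partitions_in A n"
    then have "0 \<notin># M" and "set_mset M \<subseteq> A" and "sum_mset M = n"
      using assms by (auto simp: partitions_in_def)
    then have "set_mset M \<subseteq> {1..n}"
      using member_le_sum_mset by (auto simp: Suc_le_eq intro!: gr0I)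
    moreover have "size M \<le> n"
      using size_le_sum_mset \<open>0 \<notin># M\<close> \<open>sum_mset M = n\<close> by blast
    ultimately show "M \<in> (\<Union>m\<le>n. multisets_of_size {1..n} m)"
      by (intro UN_I[of "size M"]) (simp_all add: multisets_of_size_def)
  qed
qed (intro finite_UN_I finite_atMost finite_multisets_of_size finite_atLeastAtMost)

lemma partitions_in_add_parts:
  assumes "M \<in> partitions_in A k" and "a \<in> A"
  shows "M + replicate_mset j a \<in> partitions_in A (k + j * a)"
  using assms by (auto simp: partitions_in_def)

lemma partitions_in_remove_parts:
  assumes "M \<in> partitions_in A n" and "j \<le> count M a"
  shows "j * a \<le> n" and "M - replicate_mset j a \<in> partitions_in A (n - j * a)"
proof -
  have sub: "replicate_mset j a \<subseteq># M"
    using assms(2) by (simp add: count_le_replicate_mset_subset_eq)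
  then have "sum_mset M = sum_mset (M - replicate_mset j a) + j * a"
    by (metis subset_mset.diff_add sum_mset.union sum_mset_replicate_mset of_nat_id add.commute)
  then show "j * a \<le> n" and "M - replicate_mset j a \<in> partitions_in A (n - j * a)"
    using assms(1) by (auto simp: partitions_in_def dest: in_diffD)
qed

definition marked_partitions :: "nat set \<Rightarrow> nat \<Rightarrow> (nat multiset \<times> nat \<times> nat) set" where
  "marked_partitions A n = (SIGMA M:partitions_in A n. SIGMA a:set_mset M. {1..count M a})"

lemma card_marked_partitions:
  assumes "0 \<notin> A"
  shows "card (marked_partitions A n) = N_A A n"
proof -
  have "card (marked_partitions A n)
      = (\<Sum>M\<in>partitions_in A n. \<Sum>a\<in>set_mset M. count M a)"
    unfolding marked_partitions_def using finite_partitions_in[OF assms]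
    by (simp add: card_SigmaI)
  then show ?thesis
    by (simp add: N_A_def size_multiset_overloaded_eq)
qed

lemma bij_betw_marked_partitions:
  assumes "0 \<notin> A" and "n > 0"
  shows "bij_betw (\<lambda>(M, a, j). (n - j * a, M - replicate_mset j a, a))
           (marked_partitions A n)
           (SIGMA k:{0..n-1}. partitions_in A k \<times> {a\<in>A. a dvd n - k})"
    (is "bij_betw ?remove ?marked ?smaller")
proof -
  define restore where
    "restore = (\<lambda>(k, M, a). (M + replicate_mset ((n - k) div a) a, a, (n - k) div a))"
  have remove: "?remove (M, a, j) \<in> ?smaller \<and> restore (?remove (M, a, j)) = (M, a, j)"
    if "(M, a, j) \<in> ?marked" for M a j
  proof -
    have M: "M \<in> partitions_in A n" and "a \<in># M" and j: "1 \<le> j" "j \<le> count M a"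
      using that by (auto simp: marked_partitions_def)
    then have "a \<in> A"
      by (auto simp: partitions_in_def)
    then have "a > 0"
      using assms(1) by (metis gr0I)
    then have "j * a > 0"
      using j(1) by simp
    then have "n - j * a \<in> {0..n-1}"
      using partitions_in_remove_parts(1)[OF M j(2)] by (simp del: nat_0_less_mult_iff)
    moreover have "replicate_mset j a \<subseteq># M"
      using j(2) by (simp add: count_le_replicate_mset_subset_eq)
    ultimately show ?thesis
      using partitions_in_remove_parts[OF M j(2)] \<open>a \<in> A\<close> \<open>a > 0\<close>
      by (simp add: restore_def subset_mset.diff_add)
  qed
  have restore: "restore (k, M, a) \<in> ?marked \<and> ?remove (restore (k, M, a)) = (k, M, a)"
    if "(k, M, a) \<in> ?smaller" for k M a
  proof -
    have "k < n" and M: "M \<in> partitions_in A k" and "a \<in> A" and "a dvd n - k"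
      using that assms(2) by auto
    then obtain j where j: "n - k = j * a"
      by (metis dvd_def mult.commute)
    with \<open>k < n\<close> have "j > 0" and "a > 0" and "k + j * a = n"
      by (auto intro: gr0I)
    then show ?thesis
      using partitions_in_add_parts[OF M \<open>a \<in> A\<close>, of j] j
      by (auto simp: restore_def marked_partitions_def)
  qed
  show ?thesis
    by (rule bij_betw_byWitness[where f' = restore]) (use remove restore in fastforce)+
qed

theorem N_A_eq_sum_p_A_card_divisors:
  assumes "0 \<notin> A" and "n > 0"
  shows "N_A A n = (\<Sum>k = 0..n-1. p_A A k * card {a\<in>A. a dvd n - k})"
proof -
  have finite_divisors: "finite {a\<in>A. a dvd n - k}" if "k \<in> {0..n-1}" for k
    using that assms(2) by (intro finite_subset[OF _ finite_divisors_nat[of "n - k"]]) auto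
  have "N_A A n = card (marked_partitions A n)"
    using card_marked_partitions[OF assms(1)] by simp
  also have "\<dots> = card (SIGMA k:{0..n-1}. partitions_in A k \<times> {a\<in>A. a dvd n - k})"
    using bij_betw_marked_partitions[OF assms] by (rule bij_betw_same_card)
  also have "\<dots> = (\<Sum>k = 0..n-1. p_A A k * card {a\<in>A. a dvd n - k})"
    using finite_divisors finite_partitions_in[OF assms(1)]
    by (simp add: card_SigmaI card_cartesian_product p_A_def)
  finally show ?thesis .
qed

lemma card_power_divisors:
  fixes p m :: nat
  assumes "p > 1" and "m > 0"
  shows "card {a \<in> range (\<lambda>i. p ^ i). a dvd m} = multiplicity p m + 1"
proof -
  have "{a \<in> range (\<lambda>i. p ^ i). a dvd m} = (\<lambda>i. p ^ i) ` {0..multiplicity p m}"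
    using assms by (auto simp: power_dvd_iff_le_multiplicity)
  moreover have "inj (\<lambda>i. p ^ i)"
    using assms(1) by (auto intro: injI simp: power_inject_exp)
  ultimately show ?thesis
    by (simp add: card_image inj_on_subset[of _ UNIV])
qed

theorem corollary3:
  fixes p n :: nat
  assumes "prime p" and "n > 0"
  shows "N_A (range (\<lambda>i. p ^ i)) n
         = (\<Sum>k = 0..n-1. p_A (range (\<lambda>i. p ^ i)) k * (multiplicity p (n - k) + 1))"
proof -
  have "p > 1"
    using assms(1) by (rule prime_gt_1_nat)
  then have "0 \<notin> range (\<lambda>i. p ^ i)"
    by auto
  then have "N_A (range (\<lambda>i. p ^ i)) n
      = (\<Sum>k = 0..n-1. p_A (range (\<lambda>i. p ^ i)) k * card {a \<in> range (\<lambda>i. p ^ i). a dvd n - k})"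
    using assms(2) by (rule N_A_eq_sum_p_A_card_divisors)
  also have "\<dots> = (\<Sum>k = 0..n-1. p_A (range (\<lambda>i. p ^ i)) k * (multiplicity p (n - k) + 1))"
    using \<open>p > 1\<close> assms(2) by (intro sum.cong refl) (simp add: card_power_divisors)
  finally show ?thesis .
qed

end
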